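(* Let $S_X,S_Y$ be finite nonempty action sets and $u_X,u_Y:S_X\times S_Y\to\mathbb{R}$ the stage-game payoff functions of $X$ and $Y$. There exists a zero-sum autocratic strategy for player $X$ (i.e., $u_X+u_Y\equiv0$ is enforceable) if and only if there exist $\tau_X^+,\tau_X^-\in\Delta(S_X)$ such that $u_X(\tau_X^+,s_Y)\ge-u_Y(\tau_X^+,s_Y)$ and $u_X(\tau_X^-,s_Y)\le-u_Y(\tau_X^-,s_Y)$ for all $s_Y\in S_Y$.
   Context: Two players $X,Y$ play a repeated game with finite action sets $S_X,S_Y$; $\Delta(S)$ denotes the probability distributions on $S$; functions on $S_X\times S_Y$ are extended to mixed actions in the first argument by $f(\tau_X,s_Y)=\mathbb{E}_{s_X\sim\tau_X}[f(s_X,s_Y)]$. Histories: $\mathcal{H}=\bigcup_{T\ge0}(S_X\times S_Y)^T$; behavioral strategies are maps $\sigma:\mathcal{H}\to\Delta(S)$; players independently draw actions each round from their strategies evaluated at the history of realized action pairs, with $\mathbb{E}_{\sigma_X,\sigma_Y}$ the expectation over the resulting play. For $\varphi:S_X\times S_Y\to\mathbb{R}$ and $\lambda\in[0,1)$, $\sigma_X$ is $(\varphi,\lambda)$-autocratic if for every behavioral strategy $\sigma_Y$, $\mathbb{E}_{\sigma_X,\sigma_Y}[(1-\lambda)\sum_{t\ge0}\lambda^t\varphi(s_X^t,s_Y^t)]=0$; it is $(\varphi,1)$-autocratic if for every $\sigma_Y$ the limit $\lim_{T\to\infty}\frac1{T+1}\sum_{t=0}^T\mathbb{E}_{\sigma_X,\sigma_Y}[\varphi(s_X^t,s_Y^t)]$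 exists and equals $0$. A zero-sum autocratic strategy is a behavioral strategy of $X$ that is $(u_X+u_Y,\lambda)$-autocratic for some $\lambda\in[0,1]$, i.e., enforces $\pi_X=-\pi_Y$ in expectation. *)

theory Defs
  imports "HOL-Probability.Probability_Mass_Function"
begin

text \<open>Action sets are finite types 'a (player X) and 'b (player Y); types are nonempty.
Histories are lists of realized action pairs in chronological order.\<close>

type_synonym ('a, 'b) history = "('a \<times> 'b) list"

definition mixed_ext :: "('a::finite \<Rightarrow> 'b \<Rightarrow> real) \<Rightarrow> 'a pmf \<Rightarrow> 'b \<Rightarrow> real" where
  "mixed_ext f \<tau> b = (\<Sum>a\<in>UNIV. pmf \<tau> a * f a b)"

definition hist_prob ::
  "(('a, 'b) history \<Rightarrow> 'a pmf) \<Rightarrow> (('a, 'b) history \<Rightarrow> 'b pmf) \<Rightarrow> ('a, 'b) history \<Rightarrow> real" where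
  "hist_prob \<sigma>X \<sigma>Y h =
     (\<Prod>k<length h. pmf (\<sigma>X (take k h)) (fst (h ! k)) * pmf (\<sigma>Y (take k h)) (snd (h ! k)))"

definition stage_exp ::
  "(('a::finite, 'b::finite) history \<Rightarrow> 'a pmf) \<Rightarrow> (('a, 'b) history \<Rightarrow> 'b pmf)
    \<Rightarrow> ('a \<Rightarrow> 'b \<Rightarrow> real) \<Rightarrow> nat \<Rightarrow> real" where
  "stage_exp \<sigma>X \<sigma>Y \<phi> t =
     (\<Sum>h\<in>{h::('a, 'b) history. length h = t}.
        hist_prob \<sigma>X \<sigma>Y h *
        (\<Sum>a\<in>UNIV. \<Sum>b\<in>UNIV. pmf (\<sigma>X h) a * pmf (\<sigma>Y h) b * \<phi> a b))"

definition autocratic ::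
  "('a::finite \<Rightarrow> 'b::finite \<Rightarrow> real) \<Rightarrow> real \<Rightarrow> (('a, 'b) history \<Rightarrow> 'a pmf) \<Rightarrow> bool" where
  "autocratic \<phi> lam \<sigma>X \<longleftrightarrow>
     (0 \<le> lam \<and> lam < 1 \<and>
        (\<forall>\<sigma>Y :: ('a, 'b) history \<Rightarrow> 'b pmf.
           (1 - lam) * (\<Sum>t. lam ^ t * stage_exp \<sigma>X \<sigma>Y \<phi> t) = 0))
   \<or> (lam = 1 \<and>
        (\<forall>\<sigma>Y :: ('a, 'b) history \<Rightarrow> 'b pmf.
           (\<lambda>T. (\<Sum>t\<le>T. stage_exp \<sigma>X \<sigma>Y \<phi> t) / real (T + 1)) \<longlonglongrightarrow> 0))"

definition zero_sum_autocratic ::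
  "('a::finite \<Rightarrow> 'b::finite \<Rightarrow> real) \<Rightarrow> ('a \<Rightarrow> 'b \<Rightarrow> real) \<Rightarrow> (('a, 'b) history \<Rightarrow> 'a pmf) \<Rightarrow> bool" where
  "zero_sum_autocratic uX uY \<sigma>X \<longleftrightarrow>
     (\<exists>lam. 0 \<le> lam \<and> lam \<le> 1 \<and> autocratic (\<lambda>a b. uX a b + uY a b) lam \<sigma>X)"

end

theory Submission
  imports Defs "HOL-Analysis.Analysis"
begin

(* Write phi for uX + uY.  Suppose X enforces E[phi] = 0, but no mixed action tau has
   phi(tau, b) >= 0 for all b.  By compactness of the simplex there is then an eps > 0 such that
   every mixed action of X has a reply of Y pushing phi below -eps; if Y answers every history with
   such a reply, every stage expectation is at most -eps, which rules out both discounted and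
   limit-of-means enforcement.  Applied to -phi, the same argument yields the second mixed action.

   Conversely, let X keep track of the sum D of the conditional expectations phi(tau_t, s_Y^t) over
   the past rounds and play tau+ while D < 0 and tau- otherwise.  Then |D| never exceeds a bound
   on |phi|, and since the expected sum of the first T stage payoffs equals the expectation of D
   after T rounds, the average payoff tends to 0. *)

lemma sum_pmf_UNIV [simp]: "(\<Sum>a\<in>UNIV. pmf p a) = (1::real)" for p :: "'a::finite pmf"
  by (rule sum_pmf_eq_1) auto

lemma weighted_sum_le:
  fixes w f :: "'x \<Rightarrow> real"
  assumes "finite A" and "\<And>x. x \<in> A \<Longrightarrow> 0 \<le> w x" and "sum w A = 1"
    and "\<And>x. x \<in> A \<Longrightarrow> w x \<noteq> 0 \<Longrightarrow> f x \<le> c"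
  shows "(\<Sum>x\<in>A. w x * f x) \<le> c"
proof -
  have "(\<Sum>x\<in>A. w x * f x) \<le> (\<Sum>x\<in>A. w x * c)"
    using assms(2,4) by (intro sum_mono) (metis mult_eq_0_iff mult_left_mono)
  also have "\<dots> = c"
    using assms(3) by (simp add: sum_distrib_right[symmetric])
  finally show ?thesis .
qed

lemma sum_pmf_mult_le:
  fixes p :: "'a::finite pmf"
  assumes "\<And>a. a \<in> set_pmf p \<Longrightarrow> f a \<le> c"
  shows "(\<Sum>a\<in>UNIV. pmf p a * f a) \<le> c"
  using assms by (intro weighted_sum_le) (auto simp: set_pmf_eq)

lemma mixed_ext_le:
  assumes "\<And>a. a \<in> set_pmf \<tau> \<Longrightarrow> \<phi> a b \<le> c"
  shows "mixed_ext \<phi> \<tau> b \<le> c"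
  unfolding mixed_ext_def using assms by (rule sum_pmf_mult_le)

lemma mixed_ext_add:
  "mixed_ext (\<lambda>a b. \<phi> a b + \<psi> a b) \<tau> b = mixed_ext \<phi> \<tau> b + mixed_ext \<psi> \<tau> b"
  by (simp add: mixed_ext_def distrib_left sum.distrib)

lemma mixed_ext_uminus: "mixed_ext (\<lambda>a b. - \<phi> a b) \<tau> b = - mixed_ext \<phi> \<tau> b"
  by (simp add: mixed_ext_def sum_negf)

lemma abs_mixed_ext_le:
  assumes "\<And>a b. \<bar>\<phi> a b\<bar> \<le> c"
  shows "\<bar>mixed_ext \<phi> \<tau> b\<bar> \<le> c"
  using mixed_ext_le[of \<tau> \<phi> b c] mixed_ext_le[of \<tau> "\<lambda>a b. - \<phi> a b" b c] assms
  by (simp add: mixed_ext_uminus abs_le_iff)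

lemma finite_payoff_bounded:
  fixes \<phi> :: "'a::finite \<Rightarrow> 'b::finite \<Rightarrow> real"
  obtains c where "\<And>a b. \<bar>\<phi> a b\<bar> \<le> c"
proof
  show "\<bar>\<phi> a b\<bar> \<le> Max (range (\<lambda>(a, b). \<bar>\<phi> a b\<bar>))" for a b
    by (rule Max_ge) (simp, use rangeI[of "\<lambda>(a, b). \<bar>\<phi> a b\<bar>" "(a, b)"] in simp)
qed

lemma finite_histories_length: "finite {h :: ('a::finite, 'b::finite) history. length h = n}"
  using finite_lists_length_eq[of "UNIV :: ('a \<times> 'b) set" n] by simp

lemma sum_histories_length_Suc:
  fixes f :: "('a::finite, 'b::finite) history \<Rightarrow> 'c::comm_monoid_add"
  shows "(\<Sum>h\<in>{h. length h = Suc n}. f h) =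
         (\<Sum>h\<in>{h. length h = n}. \<Sum>a\<in>UNIV. \<Sum>b\<in>UNIV. f (h @ [(a, b)]))"
proof -
  have img: "{h. length h = Suc n} = (\<lambda>(h, x). h @ [x]) ` ({h. length h = n} \<times> UNIV)"
    by (auto simp: length_Suc_conv_rev)
  have inj: "inj_on (\<lambda>(h, x). h @ [x]) ({h::('a, 'b) history. length h = n} \<times> UNIV)"
    by (auto simp: inj_on_def)
  have "(\<Sum>h\<in>{h. length h = Suc n}. f h) = (\<Sum>(h, x)\<in>{h. length h = n} \<times> UNIV. f (h @ [x]))"
    unfolding img by (subst sum.reindex[OF inj]) (simp add: case_prod_beta)
  also have "\<dots> = (\<Sum>h\<in>{h. length h = n}. \<Sum>x\<in>UNIV. f (h @ [x]))"
    by (rule sum.cartesian_product[symmetric])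
  also have "\<dots> = (\<Sum>h\<in>{h. length h = n}. \<Sum>a\<in>UNIV. \<Sum>b\<in>UNIV. f (h @ [(a, b)]))"
    by (simp add: sum.cartesian_product UNIV_Times_UNIV[symmetric] del: UNIV_Times_UNIV)
  finally show ?thesis .
qed

lemma hist_prob_Nil [simp]: "hist_prob \<sigma>X \<sigma>Y [] = 1"
  by (simp add: hist_prob_def)

lemma hist_prob_snoc [simp]:
  "hist_prob \<sigma>X \<sigma>Y (h @ [(a, b)]) = hist_prob \<sigma>X \<sigma>Y h * pmf (\<sigma>X h) a * pmf (\<sigma>Y h) b"
  by (simp add: hist_prob_def nth_append mult.assoc)

lemma hist_prob_nonneg: "0 \<le> hist_prob \<sigma>X \<sigma>Y h"
  by (simp add: hist_prob_def prod_nonneg)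

lemma sum_pmf_pair_affine:
  fixes p :: "'a::finite pmf" and q :: "'b::finite pmf"
  shows "(\<Sum>a\<in>UNIV. \<Sum>b\<in>UNIV. pmf p a * pmf q b * (d + g b)) = d + (\<Sum>b\<in>UNIV. pmf q b * g b)"
proof -
  have "(\<Sum>a\<in>UNIV. \<Sum>b\<in>UNIV. pmf p a * pmf q b * (d + g b)) =
        (\<Sum>a\<in>UNIV. pmf p a * (\<Sum>b\<in>UNIV. pmf q b * (d + g b)))"
    by (simp add: sum_distrib_left mult.assoc)
  also have "\<dots> = d + (\<Sum>b\<in>UNIV. pmf q b * g b)"
    by (simp add: distrib_left sum.distrib sum_distrib_right[symmetric])
  finally show ?thesis .
qed

lemma sum_hist_prob [simp]:
  fixes \<sigma>X :: "('a::finite, 'b::finite) history \<Rightarrow> 'a pmf"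
  shows "(\<Sum>h\<in>{h. length h = n}. hist_prob \<sigma>X \<sigma>Y h) = 1"
proof (induction n)
  case (Suc n)
  then show ?case
    using sum_pmf_pair_affine[of _ _ 0 "\<lambda>_. 1"]
    by (simp add: sum_histories_length_Suc sum_distrib_left[symmetric])
qed simp

lemma sum_hist_prob_mult_le:
  fixes \<sigma>X :: "('a::finite, 'b::finite) history \<Rightarrow> 'a pmf"
  assumes "\<And>h. length h = n \<Longrightarrow> f h \<le> c"
  shows "(\<Sum>h\<in>{h. length h = n}. hist_prob \<sigma>X \<sigma>Y h * f h) \<le> c"
  using assms by (intro weighted_sum_le) (auto simp: finite_histories_length hist_prob_nonneg)

lemma stage_exp_uminus: "stage_exp \<sigma>X \<sigma>Y (\<lambda>a b. - \<phi> a b) t = - stage_exp \<sigma>X \<sigma>Y \<phi> t"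
  by (simp add: stage_exp_def sum_negf)

lemma stage_exp_eq_mixed_ext:
  "stage_exp \<sigma>X \<sigma>Y \<phi> t =
     (\<Sum>h\<in>{h. length h = t}. hist_prob \<sigma>X \<sigma>Y h * (\<Sum>b\<in>UNIV. pmf (\<sigma>Y h) b * mixed_ext \<phi> (\<sigma>X h) b))"
proof -
  have "(\<Sum>a\<in>UNIV. \<Sum>b\<in>UNIV. pmf p a * pmf q b * \<phi> a b) =
        (\<Sum>b\<in>UNIV. pmf q b * (\<Sum>a\<in>UNIV. pmf p a * \<phi> a b))" for p q
    by (subst sum.swap) (simp add: sum_distrib_left mult_ac)
  then show ?thesis
    by (simp add: stage_exp_def mixed_ext_def)
qed

lemma stage_exp_le:
  fixes \<sigma>X :: "('a::finite, 'b::finite) history \<Rightarrow> 'a pmf"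
  assumes "\<And>h b. b \<in> set_pmf (\<sigma>Y h) \<Longrightarrow> mixed_ext \<phi> (\<sigma>X h) b \<le> c"
  shows "stage_exp \<sigma>X \<sigma>Y \<phi> t \<le> c"
  unfolding stage_exp_eq_mixed_ext using assms
  by (intro sum_hist_prob_mult_le sum_pmf_mult_le)

lemma abs_stage_exp_le:
  fixes \<sigma>X :: "('a::finite, 'b::finite) history \<Rightarrow> 'a pmf"
  assumes "\<And>a b. \<bar>\<phi> a b\<bar> \<le> c"
  shows "\<bar>stage_exp \<sigma>X \<sigma>Y \<phi> t\<bar> \<le> c"
proof -
  have "stage_exp \<sigma>X \<sigma>Y \<psi> t \<le> c" if "\<And>a b. \<psi> a b \<le> c" for \<psi>
    using that by (intro stage_exp_le mixed_ext_le)
  from this[of \<phi>] this[of "\<lambda>a b. - \<phi> a b"] show ?thesis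
    using assms by (simp add: stage_exp_uminus abs_le_iff)
qed

lemma summable_discounted_stage_exp:
  fixes \<sigma>X :: "('a::finite, 'b::finite) history \<Rightarrow> 'a pmf"
  assumes "0 \<le> lam" and "lam < 1"
  shows "summable (\<lambda>t. lam ^ t * stage_exp \<sigma>X \<sigma>Y \<phi> t)"
proof -
  obtain c where c: "\<And>a b. \<bar>\<phi> a b\<bar> \<le> c"
    using finite_payoff_bounded by blast
  show ?thesis
  proof (rule summable_comparison_test')
    show "summable (\<lambda>t. c * lam ^ t)"
      using assms by (intro summable_mult summable_geometric) simp
    show "norm (lam ^ t * stage_exp \<sigma>X \<sigma>Y \<phi> t) \<le> c * lam ^ t" for t
      using mult_left_mono[OF abs_stage_exp_le[where \<phi> = \<phi>, OF c], of "lam ^ t"] assms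
      by (simp add: abs_mult mult.commute)
  qed
qed

lemma autocratic_uminus:
  fixes \<sigma>X :: "('a::finite, 'b::finite) history \<Rightarrow> 'a pmf"
  assumes "autocratic \<phi> lam \<sigma>X"
  shows "autocratic (\<lambda>a b. - \<phi> a b) lam \<sigma>X"
proof -
  have discounted: "(\<Sum>t. lam ^ t * stage_exp \<sigma>X \<sigma>Y (\<lambda>a b. - \<phi> a b) t) =
      - (\<Sum>t. lam ^ t * stage_exp \<sigma>X \<sigma>Y \<phi> t)" if "0 \<le> lam" "lam < 1" for \<sigma>Y
    using suminf_minus[OF summable_discounted_stage_exp[OF that]] by (simp add: stage_exp_uminus)
  have average: "(\<lambda>T. (\<Sum>t\<le>T. stage_exp \<sigma>X \<sigma>Y (\<lambda>a b. - \<phi> a b) t) / real (T + 1)) =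
      (\<lambda>T. - ((\<Sum>t\<le>T. stage_exp \<sigma>X \<sigma>Y \<phi> t) / real (T + 1)))" for \<sigma>Y
    by (simp add: stage_exp_uminus sum_negf)
  from assms[unfolded autocratic_def] show ?thesis
  proof (elim disjE conjE)
    assume "0 \<le> lam" "lam < 1"
      and "\<forall>\<sigma>Y. (1 - lam) * (\<Sum>t. lam ^ t * stage_exp \<sigma>X \<sigma>Y \<phi> t) = 0"
    then have "(1 - lam) * (\<Sum>t. lam ^ t * stage_exp \<sigma>X \<sigma>Y (\<lambda>a b. - \<phi> a b) t) = 0" for \<sigma>Y
      using discounted[OF \<open>0 \<le> lam\<close> \<open>lam < 1\<close>, of \<sigma>Y] by simp
    then show ?thesis
      unfolding autocratic_def using \<open>0 \<le> lam\<close> \<open>lam < 1\<close> by blast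
  next
    assume "lam = 1"
      and enforced: "\<forall>\<sigma>Y. (\<lambda>T. (\<Sum>t\<le>T. stage_exp \<sigma>X \<sigma>Y \<phi> t) / real (T + 1)) \<longlonglongrightarrow> 0"
    have "(\<lambda>T. (\<Sum>t\<le>T. stage_exp \<sigma>X \<sigma>Y (\<lambda>a b. - \<phi> a b) t) / real (T + 1)) \<longlonglongrightarrow> 0" for \<sigma>Y
      using tendsto_minus[OF enforced[rule_format, of \<sigma>Y]] unfolding average by simp
    then show ?thesis
      unfolding autocratic_def using \<open>lam = 1\<close> by blast
  qed
qed

lemma autocratic_nonneg_if_stage_exp_le:
  fixes \<sigma>X :: "('a::finite, 'b::finite) history \<Rightarrow> 'a pmf"
  assumes "autocratic \<phi> lam \<sigma>X" and "\<And>t. stage_exp \<sigma>X \<sigma>Y \<phi> t \<le> c"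
  shows "0 \<le> c"
  using assms(1) unfolding autocratic_def
proof (elim disjE conjE)
  assume "0 \<le> lam" "lam < 1"
    and enforced: "\<forall>\<sigma>Y. (1 - lam) * (\<Sum>t. lam ^ t * stage_exp \<sigma>X \<sigma>Y \<phi> t) = 0"
  have geometric: "summable (\<lambda>t. lam ^ t)" "(\<Sum>t. lam ^ t) = 1 / (1 - lam)"
    using \<open>0 \<le> lam\<close> \<open>lam < 1\<close> by (simp_all add: summable_geometric suminf_geometric)
  have "(\<Sum>t. lam ^ t * stage_exp \<sigma>X \<sigma>Y \<phi> t) \<le> (\<Sum>t. lam ^ t * c)"
    using assms(2) \<open>0 \<le> lam\<close> \<open>lam < 1\<close> geometric(1)
    by (intro suminf_le summable_discounted_stage_exp summable_mult2 mult_left_mono) simp_all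
  also have "\<dots> = c / (1 - lam)"
    using geometric by (simp add: suminf_mult2[symmetric])
  finally show "0 \<le> c"
    using enforced \<open>lam < 1\<close> by (simp add: field_simps)
next
  assume enforced: "\<forall>\<sigma>Y. (\<lambda>T. (\<Sum>t\<le>T. stage_exp \<sigma>X \<sigma>Y \<phi> t) / real (T + 1)) \<longlonglongrightarrow> 0"
  have "(\<Sum>t\<le>T. stage_exp \<sigma>X \<sigma>Y \<phi> t) / real (T + 1) \<le> c" for T
    using sum_mono[of "{..T}" "stage_exp \<sigma>X \<sigma>Y \<phi>" "\<lambda>_. c"] assms(2)
    by (simp add: divide_le_eq mult.commute)
  then show "0 \<le> c"
    using LIMSEQ_le_const2[OF enforced[rule_format, of \<sigma>Y]] by blast
qed

lemma continuous_on_Min_image: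
  fixes f :: "'i \<Rightarrow> 'x::topological_space \<Rightarrow> 'r::linorder_topology"
  assumes "finite I" and "I \<noteq> {}" and "\<And>i. i \<in> I \<Longrightarrow> continuous_on S (f i)"
  shows "continuous_on S (\<lambda>x. Min ((\<lambda>i. f i x) ` I))"
  using assms
proof (induction I rule: finite_ne_induct)
  case (insert i I)
  then show ?case
    by (simp add: continuous_on_min)
qed simp

definition prob_simplex :: "(real ^ 'a::finite) set" where
  "prob_simplex = {p. (\<forall>i. 0 \<le> p $ i) \<and> (\<Sum>i\<in>UNIV. p $ i) = 1}"

lemma compact_prob_simplex: "compact (prob_simplex :: (real ^ 'a::finite) set)"
proof -
  have "prob_simplex \<subseteq> cbox 0 (\<chi> i. 1 :: real ^ 'a)"
  proof
    fix p :: "real ^ 'a" assume p: "p \<in> prob_simplex"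
    then have "p $ i \<le> (\<Sum>j\<in>UNIV. p $ j)" for i
      by (intro member_le_sum) (auto simp: prob_simplex_def)
    with p show "p \<in> cbox 0 (\<chi> i. 1)"
      by (simp add: mem_box_cart prob_simplex_def)
  qed
  moreover have "closed (prob_simplex :: (real ^ 'a) set)"
    unfolding prob_simplex_def
    by (intro closed_Collect_conj closed_Collect_all closed_Collect_le closed_Collect_eq continuous_intros)
  ultimately show ?thesis
    using bounded_cbox bounded_subset compact_eq_bounded_closed by blast
qed

lemma pmf_vector_in_prob_simplex: "(\<chi> a. pmf \<tau> a) \<in> prob_simplex"
  by (simp add: prob_simplex_def)

lemma prob_simplex_pmf_vector:
  assumes "p \<in> prob_simplex"
  obtains \<tau> where "(\<chi> a. pmf \<tau> a) = p"
proof
  have nonneg: "\<And>a. 0 \<le> p $ a" and "(\<Sum>a\<in>UNIV. p $ a) = 1"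
    using assms by (auto simp: prob_simplex_def)
  then have "(\<integral>\<^sup>+a. ennreal (p $ a) \<partial>count_space UNIV) = 1"
    by (simp add: nn_integral_count_space_finite)
  then show "(\<chi> a. pmf (embed_pmf (\<lambda>a. p $ a)) a) = p"
    by (simp add: pmf_embed_pmf[OF nonneg] vec_eq_iff)
qed

lemma uniformly_negative_reply:
  fixes \<phi> :: "'a::finite \<Rightarrow> 'b::finite \<Rightarrow> real"
  assumes "\<And>\<tau>. \<exists>b. mixed_ext \<phi> \<tau> b < 0"
  obtains \<epsilon> where "0 < \<epsilon>" and "\<And>\<tau>. \<exists>b. mixed_ext \<phi> \<tau> b \<le> - \<epsilon>"
proof -
  define worst :: "real ^ 'a \<Rightarrow> real" where
    "worst p = Min (range (\<lambda>b. \<Sum>a\<in>UNIV. p $ a * \<phi> a b))" for p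
  have worst_pmf: "worst (\<chi> a. pmf \<tau> a) = Min (range (mixed_ext \<phi> \<tau>))" for \<tau>
    by (simp add: worst_def mixed_ext_def)
  have "continuous_on prob_simplex worst"
    unfolding worst_def by (intro continuous_on_Min_image continuous_intros) simp_all
  moreover have "prob_simplex \<noteq> {}"
    using pmf_vector_in_prob_simplex by blast
  ultimately obtain p0 where "p0 \<in> prob_simplex"
    and p0_max: "\<And>p. p \<in> prob_simplex \<Longrightarrow> worst p \<le> worst p0"
    using continuous_attains_sup[OF compact_prob_simplex] by blast
  obtain \<tau>0 where \<tau>0: "(\<chi> a. pmf \<tau>0 a) = p0"
    using prob_simplex_pmf_vector[OF \<open>p0 \<in> prob_simplex\<close>] by blast
  obtain b0 where "mixed_ext \<phi> \<tau>0 b0 < 0"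
    using assms by blast
  moreover have "Min (range (mixed_ext \<phi> \<tau>0)) \<le> mixed_ext \<phi> \<tau>0 b0"
    by (rule Min_le) auto
  ultimately have "worst p0 < 0"
    unfolding \<tau>0[symmetric] worst_pmf by linarith
  show ?thesis
  proof (rule that)
    show "0 < - worst p0"
      using \<open>worst p0 < 0\<close> by simp
    show "\<exists>b. mixed_ext \<phi> \<tau> b \<le> - (- worst p0)" for \<tau>
    proof -
      have "Min (range (mixed_ext \<phi> \<tau>)) \<in> range (mixed_ext \<phi> \<tau>)"
        by (intro Min_in) auto
      then obtain b where "mixed_ext \<phi> \<tau> b = Min (range (mixed_ext \<phi> \<tau>))"
        by (metis rangeE)
      moreover have "Min (range (mixed_ext \<phi> \<tau>)) \<le> worst p0"
        using p0_max[OF pmf_vector_in_prob_simplex] worst_pmf by metis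
      ultimately show ?thesis
        by (intro exI[of _ b]) simp
    qed
  qed
qed

lemma autocratic_ex_nonneg_mixed_action:
  fixes \<sigma>X :: "('a::finite, 'b::finite) history \<Rightarrow> 'a pmf"
  assumes "autocratic \<phi> lam \<sigma>X"
  shows "\<exists>\<tau>. \<forall>b. 0 \<le> mixed_ext \<phi> \<tau> b"
proof (rule ccontr)
  assume "\<nexists>\<tau>. \<forall>b. 0 \<le> mixed_ext \<phi> \<tau> b"
  then have "\<And>\<tau>. \<exists>b. mixed_ext \<phi> \<tau> b < 0"
    by (auto simp: not_le)
  then obtain \<epsilon> where "0 < \<epsilon>" and "\<And>\<tau>. \<exists>b. mixed_ext \<phi> \<tau> b \<le> - \<epsilon>"
    using uniformly_negative_reply by blast
  then have "\<forall>h. \<exists>b. mixed_ext \<phi> (\<sigma>X h) b \<le> - \<epsilon>"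
    by blast
  then obtain reply where reply: "\<forall>h. mixed_ext \<phi> (\<sigma>X h) (reply h) \<le> - \<epsilon>"
    by (rule choice[THEN exE])
  have "stage_exp \<sigma>X (\<lambda>h. return_pmf (reply h)) \<phi> t \<le> - \<epsilon>" for t
    using reply by (intro stage_exp_le) simp
  then have "0 \<le> - \<epsilon>"
    by (rule autocratic_nonneg_if_stage_exp_le[OF assms])
  with \<open>0 < \<epsilon>\<close> show False
    by simp
qed

lemma sum_stage_exp_eq_expectation:
  fixes \<sigma>X :: "('a::finite, 'b::finite) history \<Rightarrow> 'a pmf"
  assumes "D [] = 0" and "\<And>h a b. D (h @ [(a, b)]) = D h + mixed_ext \<phi> (\<sigma>X h) b"
  shows "(\<Sum>t<T. stage_exp \<sigma>X \<sigma>Y \<phi> t) = (\<Sum>h\<in>{h. length h = T}. hist_prob \<sigma>X \<sigma>Y h * D h)"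
proof (induction T)
  case 0
  then show ?case
    using assms(1) by simp
next
  case (Suc T)
  have "(\<Sum>h\<in>{h. length h = Suc T}. hist_prob \<sigma>X \<sigma>Y h * D h) =
        (\<Sum>h\<in>{h. length h = T}. hist_prob \<sigma>X \<sigma>Y h *
           (\<Sum>a\<in>UNIV. \<Sum>b\<in>UNIV. pmf (\<sigma>X h) a * pmf (\<sigma>Y h) b * (D h + mixed_ext \<phi> (\<sigma>X h) b)))"
    by (simp add: sum_histories_length_Suc assms(2) sum_distrib_left mult_ac)
  also have "\<dots> = (\<Sum>h\<in>{h. length h = T}. hist_prob \<sigma>X \<sigma>Y h * D h) + stage_exp \<sigma>X \<sigma>Y \<phi> T"
    by (simp only: sum_pmf_pair_affine) (simp add: distrib_left sum.distrib stage_exp_eq_mixed_ext)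
  finally show ?case
    using Suc by simp
qed

lemma autocratic_if_bounded_compensator:
  fixes \<sigma>X :: "('a::finite, 'b::finite) history \<Rightarrow> 'a pmf"
  assumes "D [] = 0" and "\<And>h a b. D (h @ [(a, b)]) = D h + mixed_ext \<phi> (\<sigma>X h) b"
    and bounded: "\<And>h. \<bar>D h\<bar> \<le> M"
  shows "autocratic \<phi> 1 \<sigma>X"
  unfolding autocratic_def
proof (intro disjI2 conjI refl allI)
  fix \<sigma>Y :: "('a, 'b) history \<Rightarrow> 'b pmf"
  have "\<bar>\<Sum>t\<le>T. stage_exp \<sigma>X \<sigma>Y \<phi> t\<bar> \<le> M" for T
  proof -
    have "(\<Sum>t\<le>T. stage_exp \<sigma>X \<sigma>Y \<phi> t) = (\<Sum>h\<in>{h. length h = Suc T}. hist_prob \<sigma>X \<sigma>Y h * D h)"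
      using sum_stage_exp_eq_expectation[OF assms(1,2), of \<sigma>Y "Suc T"] by (simp only: lessThan_Suc_atMost)
    moreover have "(\<Sum>h\<in>{h. length h = Suc T}. hist_prob \<sigma>X \<sigma>Y h * g h) \<le> M"
      if "\<And>h. g h \<le> \<bar>D h\<bar>" for g
      using that bounded by (intro sum_hist_prob_mult_le) (meson order.trans)
    from this[of D] this[of "\<lambda>h. - D h"] have
      "\<bar>\<Sum>h\<in>{h. length h = Suc T}. hist_prob \<sigma>X \<sigma>Y h * D h\<bar> \<le> M"
      by (simp add: sum_negf abs_le_iff)
    ultimately show ?thesis
      by simp
  qed
  then have "norm ((\<Sum>t\<le>T. stage_exp \<sigma>X \<sigma>Y \<phi> t) / real (T + 1)) \<le> M * inverse (real (T + 1))" for T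
    by (simp add: divide_inverse abs_mult mult_right_mono)
  moreover have "(\<lambda>T. M * inverse (real (T + 1))) \<longlonglongrightarrow> 0"
    using tendsto_mult_right_zero[OF LIMSEQ_inverse_real_of_nat] by simp
  ultimately show "(\<lambda>T. (\<Sum>t\<le>T. stage_exp \<sigma>X \<sigma>Y \<phi> t) / real (T + 1)) \<longlonglongrightarrow> 0"
    by (rule Lim_null_comparison[OF always_eventually[OF allI]])
qed

definition balance :: "('a::finite \<Rightarrow> 'b \<Rightarrow> real) \<Rightarrow> 'a pmf \<Rightarrow> 'a pmf \<Rightarrow> ('a, 'b) history \<Rightarrow> real" where
  "balance \<phi> \<tau>p \<tau>m = foldl (\<lambda>d (a, b). d + mixed_ext \<phi> (if d < 0 then \<tau>p else \<tau>m) b) 0"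

definition balancing_strategy ::
  "('a::finite \<Rightarrow> 'b \<Rightarrow> real) \<Rightarrow> 'a pmf \<Rightarrow> 'a pmf \<Rightarrow> ('a, 'b) history \<Rightarrow> 'a pmf" where
  "balancing_strategy \<phi> \<tau>p \<tau>m h = (if balance \<phi> \<tau>p \<tau>m h < 0 then \<tau>p else \<tau>m)"

lemma balance_Nil: "balance \<phi> \<tau>p \<tau>m [] = 0"
  by (simp add: balance_def)

lemma balance_snoc:
  "balance \<phi> \<tau>p \<tau>m (h @ [(a, b)]) = balance \<phi> \<tau>p \<tau>m h + mixed_ext \<phi> (balancing_strategy \<phi> \<tau>p \<tau>m h) b"
  by (simp add: balance_def balancing_strategy_def)

lemma abs_balance_le:
  assumes "\<And>b. 0 \<le> mixed_ext \<phi> \<tau>p b" and "\<And>b. mixed_ext \<phi> \<tau>m b \<le> 0"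
    and bound: "\<And>a b. \<bar>\<phi> a b\<bar> \<le> c"
  shows "\<bar>balance \<phi> \<tau>p \<tau>m h\<bar> \<le> c"
proof (induction h rule: rev_induct)
  case Nil
  show ?case
    using bound[of undefined undefined] by (simp add: balance_Nil)
next
  case (snoc x h)
  obtain a b where x: "x = (a, b)"
    by fastforce
  have "\<bar>mixed_ext \<phi> \<tau>p b\<bar> \<le> c" and "\<bar>mixed_ext \<phi> \<tau>m b\<bar> \<le> c"
    using bound by (rule abs_mixed_ext_le)+
  then show ?case
    using snoc.IH assms(1,2)[of b]
    by (cases "balance \<phi> \<tau>p \<tau>m h < 0") (auto simp: x balance_snoc balancing_strategy_def abs_le_iff)
qed

lemma autocratic_balancing_strategy:
  fixes \<phi> :: "'a::finite \<Rightarrow> 'b::finite \<Rightarrow> real"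
  assumes "\<And>b. 0 \<le> mixed_ext \<phi> \<tau>p b" and "\<And>b. mixed_ext \<phi> \<tau>m b \<le> 0"
  shows "autocratic \<phi> 1 (balancing_strategy \<phi> \<tau>p \<tau>m :: ('a, 'b) history \<Rightarrow> 'a pmf)"
proof -
  obtain c where c: "\<And>a b. \<bar>\<phi> a b\<bar> \<le> c"
    using finite_payoff_bounded by blast
  show ?thesis
  proof (rule autocratic_if_bounded_compensator[where D = "balance \<phi> \<tau>p \<tau>m" and M = c])
    show "balance \<phi> \<tau>p \<tau>m [] = 0"
      by (rule balance_Nil)
    show "balance \<phi> \<tau>p \<tau>m (h @ [(a, b)]) =
        balance \<phi> \<tau>p \<tau>m h + mixed_ext \<phi> (balancing_strategy \<phi> \<tau>p \<tau>m h) b" for h a b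
      by (rule balance_snoc)
    show "\<bar>balance \<phi> \<tau>p \<tau>m h\<bar> \<le> c" for h
      using assms c by (rule abs_balance_le)
  qed
qed

lemma ex_autocratic_iff:
  fixes \<phi> :: "'a::finite \<Rightarrow> 'b::finite \<Rightarrow> real"
  shows "(\<exists>\<sigma>X :: ('a, 'b) history \<Rightarrow> 'a pmf. \<exists>lam. 0 \<le> lam \<and> lam \<le> 1 \<and> autocratic \<phi> lam \<sigma>X) \<longleftrightarrow>
         (\<exists>\<tau>. \<forall>b. 0 \<le> mixed_ext \<phi> \<tau> b) \<and> (\<exists>\<tau>. \<forall>b. mixed_ext \<phi> \<tau> b \<le> 0)"
proof
  assume "\<exists>\<sigma>X :: ('a, 'b) history \<Rightarrow> 'a pmf. \<exists>lam. 0 \<le> lam \<and> lam \<le> 1 \<and> autocratic \<phi> lam \<sigma>X"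
  then obtain \<sigma>X :: "('a, 'b) history \<Rightarrow> 'a pmf" and lam where "autocratic \<phi> lam \<sigma>X"
    by blast
  from autocratic_ex_nonneg_mixed_action[OF this]
    autocratic_ex_nonneg_mixed_action[OF autocratic_uminus[OF this]]
  show "(\<exists>\<tau>. \<forall>b. 0 \<le> mixed_ext \<phi> \<tau> b) \<and> (\<exists>\<tau>. \<forall>b. mixed_ext \<phi> \<tau> b \<le> 0)"
    by (simp add: mixed_ext_uminus)
next
  assume "(\<exists>\<tau>. \<forall>b. 0 \<le> mixed_ext \<phi> \<tau> b) \<and> (\<exists>\<tau>. \<forall>b. mixed_ext \<phi> \<tau> b \<le> 0)"
  then obtain \<tau>p \<tau>m where "\<And>b. 0 \<le> mixed_ext \<phi> \<tau>p b" and "\<And>b. mixed_ext \<phi> \<tau>m b \<le> 0"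
    by blast
  from autocratic_balancing_strategy[OF this]
  show "\<exists>\<sigma>X :: ('a, 'b) history \<Rightarrow> 'a pmf. \<exists>lam. 0 \<le> lam \<and> lam \<le> 1 \<and> autocratic \<phi> lam \<sigma>X"
    by (intro exI[of _ "balancing_strategy \<phi> \<tau>p \<tau>m"] exI[of _ 1]) simp
qed

theorem proposition13:
  fixes uX uY :: "'a::finite \<Rightarrow> 'b::finite \<Rightarrow> real"
  shows "(\<exists>\<sigma>X :: ('a, 'b) history \<Rightarrow> 'a pmf. zero_sum_autocratic uX uY \<sigma>X) \<longleftrightarrow>
         (\<exists>\<tau>p \<tau>m :: 'a pmf. \<forall>b.
             mixed_ext uX \<tau>p b \<ge> - mixed_ext uY \<tau>p b \<and>
             mixed_ext uX \<tau>m b \<le> - mixed_ext uY \<tau>m b)"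
proof -
  have "- mixed_ext uY \<tau> b \<le> mixed_ext uX \<tau> b \<longleftrightarrow> 0 \<le> mixed_ext (\<lambda>a b. uX a b + uY a b) \<tau> b"
    and "mixed_ext uX \<tau> b \<le> - mixed_ext uY \<tau> b \<longleftrightarrow> mixed_ext (\<lambda>a b. uX a b + uY a b) \<tau> b \<le> 0"
    for \<tau> b
    by (auto simp: mixed_ext_add)
  then show ?thesis
    unfolding zero_sum_autocratic_def ex_autocratic_iff by blast
qed

end
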